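(* For all integers $n,k\ge 0$, the unsigned Stirling numbers of the first kind satisfy $\left[{n \atop k}\right] \le \frac{2^n n!}{k!}$.
   Context: $\left[{n \atop k}\right]$ denotes the unsigned Stirling number of the first kind (number of permutations of $n$ elements with exactly $k$ cycles), satisfying $\left[{n+1 \atop k}\right] = n\left[{n \atop k}\right] + \left[{n \atop k-1}\right]$. *)

theory Defs
  imports Complex_Main "HOL-Combinatorics.Stirling"
begin

end

theory Submission
  imports Defs
begin

text \<open>Multiplying the recurrence by \<open>(k+1)!\<close> gives
  \<open>[n+1, k+1] (k+1)! = n [n, k+1] (k+1)! + (k+1) [n, k] k!\<close>, so by induction the left-hand side
  is at most \<open>(n + k + 1) 2\<^sup>n n!\<close>; as \<open>[n, k] = 0\<close> for \<open>k > n\<close>, only \<open>k \<le> n\<close> matters, where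
  \<open>n + k + 1 \<le> 2 (n + 1)\<close>.\<close>

lemma stirling_mult_fact_le: "stirling n k * fact k \<le> 2 ^ n * fact n"
proof (induction n k rule: stirling.induct)
  case (4 n k)
  show ?case
  proof (cases "k \<le> n")
    case False
    then show ?thesis by simp
  next
    case True
    let ?B = "2 ^ n * fact n :: nat"
    have "stirling (Suc n) (Suc k) * fact (Suc k)
        = n * (stirling n (Suc k) * fact (Suc k)) + Suc k * (stirling n k * fact k)"
      by (simp add: algebra_simps)
    also have "\<dots> \<le> n * ?B + Suc k * ?B"
      using "4.IH" by (intro add_mono mult_left_mono) auto
    also have "\<dots> = (n + Suc k) * ?B"
      by (simp add: algebra_simps)
    also have "\<dots> \<le> 2 * Suc n * ?B"
      using True by (intro mult_right_mono) auto
    also have "\<dots> = 2 ^ Suc n * fact (Suc n)"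
      by (simp add: algebra_simps)
    finally show ?thesis .
  qed
qed auto

theorem lemma1:
  fixes n k :: nat
  shows "real (stirling n k) \<le> 2 ^ n * fact n / fact k"
proof -
  have "real (stirling n k * fact k) \<le> real (2 ^ n * fact n)"
    using stirling_mult_fact_le by (rule of_nat_mono)
  then show ?thesis
    by (simp add: field_simps)
qed

end
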